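(* The covering number of the lattice of integer flows satisfies $\mathrm{Cov}(\Lambda)=\max_D q(v^D)$, where $D$ ranges over the strongly connected orientations of $G^\circ$ (the graph $G$ with its bridges deleted) and $v^D\in H$ is the unique flow satisfying $2\langle v^D,x^C\rangle=q(x^C)$ for every circuit $C\subseteq D$.
   Context: $G=(V,E)$ is a finite connected graph, possibly with parallel edges and loops; $\mathbb E$ is the set of oriented edges ($e$ and its reverse $\bar e$). Real $1$-chains $x:\mathbb E\to\mathbb R$ satisfy $x_{\bar e}=-x_e$; $\langle x,y\rangle=\sum_{e\in E}x_ey_e$, $q(x)=\langle x,x\rangle$. A flow satisfies $\sum_{e\text{ with tail }v}x_e=0$ at every vertex $v$; $H$ is the space of real flows and $\Lambda$ the lattice of integer flows. A circuit is an orientation of a cycle as a directed cycle; $x^C_e=1$ if $e\in C$, $-1$ if $\bar e\in C$, $0$ otherwise. An orientation is strongly connected if on each connected component any two vertices are joined by directed paths in both directions. For a full-rank lattice $\mathcal L$ in a real vector space with positive quadratic form $q$, the covering number $\mathrm{Cov}(\mathcal L)$ is the smallest $r$ such that for every point $x$ there is $m\in\mathcal L$ with $q(x-m)\le r$. *)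

theory Defs
  imports Complex_Main
begin

text \<open>A finite multigraph (parallel edges and loops allowed) is given by a vertex set V,
an edge set E and, for each edge, a reference tail src and head tgt.
An oriented edge is a pair (e, b): b = True is e in its reference direction,
b = False is the reverse edge.
A real 1-chain x is stored by its values on the reference orientations
(x_e for e in E); the value on the reverse edge is -x_e.\<close>

definition otail :: "('e \<Rightarrow> 'v) \<Rightarrow> ('e \<Rightarrow> 'v) \<Rightarrow> 'e \<times> bool \<Rightarrow> 'v" where
  "otail src tgt d = (if snd d then src (fst d) else tgt (fst d))"

definition ohead :: "('e \<Rightarrow> 'v) \<Rightarrow> ('e \<Rightarrow> 'v) \<Rightarrow> 'e \<times> bool \<Rightarrow> 'v" where
  "ohead src tgt d = (if snd d then tgt (fst d) else src (fst d))"

definition oval :: "('e \<Rightarrow> real) \<Rightarrow> 'e \<times> bool \<Rightarrow> real" where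
  "oval x d = (if snd d then x (fst d) else - x (fst d))"

definition inner_ch :: "'e set \<Rightarrow> ('e \<Rightarrow> real) \<Rightarrow> ('e \<Rightarrow> real) \<Rightarrow> real" where
  "inner_ch E x y = (\<Sum>e\<in>E. x e * y e)"

definition qf :: "'e set \<Rightarrow> ('e \<Rightarrow> real) \<Rightarrow> real" where
  "qf E x = inner_ch E x x"

definition is_flow :: "'v set \<Rightarrow> 'e set \<Rightarrow> ('e \<Rightarrow> 'v) \<Rightarrow> ('e \<Rightarrow> 'v) \<Rightarrow> ('e \<Rightarrow> real) \<Rightarrow> bool" where
  "is_flow V E src tgt x \<longleftrightarrow>
     (\<forall>e. e \<notin> E \<longrightarrow> x e = 0) \<and>
     (\<forall>v\<in>V. (\<Sum>d\<in>{d \<in> E \<times> UNIV. otail src tgt d = v}. oval x d) = 0)"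

definition flows :: "'v set \<Rightarrow> 'e set \<Rightarrow> ('e \<Rightarrow> 'v) \<Rightarrow> ('e \<Rightarrow> 'v) \<Rightarrow> ('e \<Rightarrow> real) set" where
  "flows V E src tgt = {x. is_flow V E src tgt x}"

definition int_flows :: "'v set \<Rightarrow> 'e set \<Rightarrow> ('e \<Rightarrow> 'v) \<Rightarrow> ('e \<Rightarrow> 'v) \<Rightarrow> ('e \<Rightarrow> real) set" where
  "int_flows V E src tgt = {x \<in> flows V E src tgt. \<forall>e\<in>E. x e \<in> \<int>}"

definition cov_number :: "(('e \<Rightarrow> real) \<Rightarrow> real) \<Rightarrow> ('e \<Rightarrow> real) set \<Rightarrow> ('e \<Rightarrow> real) set \<Rightarrow> real" where
  "cov_number Q S L = Inf {r. \<forall>x\<in>S. \<exists>m\<in>L. Q (\<lambda>e. x e - m e) \<le> r}"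

definition adj :: "('e \<Rightarrow> 'v) \<Rightarrow> ('e \<Rightarrow> 'v) \<Rightarrow> 'e set \<Rightarrow> ('v \<times> 'v) set" where
  "adj src tgt F = {(src e, tgt e) | e. e \<in> F} \<union> {(tgt e, src e) | e. e \<in> F}"

definition is_bridge :: "'e set \<Rightarrow> ('e \<Rightarrow> 'v) \<Rightarrow> ('e \<Rightarrow> 'v) \<Rightarrow> 'e \<Rightarrow> bool" where
  "is_bridge E src tgt e \<longleftrightarrow> e \<in> E \<and> (src e, tgt e) \<notin> (adj src tgt (E - {e}))\<^sup>*"

definition bridgeless_edges :: "'e set \<Rightarrow> ('e \<Rightarrow> 'v) \<Rightarrow> ('e \<Rightarrow> 'v) \<Rightarrow> 'e set" where
  "bridgeless_edges E src tgt = {e \<in> E. \<not> is_bridge E src tgt e}"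

definition is_orientation :: "'e set \<Rightarrow> ('e \<times> bool) set \<Rightarrow> bool" where
  "is_orientation F D \<longleftrightarrow> D \<subseteq> F \<times> UNIV \<and>
     (\<forall>e\<in>F. ((e, True) \<in> D) \<noteq> ((e, False) \<in> D))"

definition darcs :: "('e \<Rightarrow> 'v) \<Rightarrow> ('e \<Rightarrow> 'v) \<Rightarrow> ('e \<times> bool) set \<Rightarrow> ('v \<times> 'v) set" where
  "darcs src tgt D = {(otail src tgt d, ohead src tgt d) | d. d \<in> D}"

text \<open>Strongly connected orientation of the graph (V, F): on each connected component
any two vertices are joined by directed paths (in both directions).\<close>
definition strongly_connected_orientation ::
  "'v set \<Rightarrow> 'e set \<Rightarrow> ('e \<Rightarrow> 'v) \<Rightarrow> ('e \<Rightarrow> 'v) \<Rightarrow> ('e \<times> bool) set \<Rightarrow> bool" where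
  "strongly_connected_orientation V F src tgt D \<longleftrightarrow> is_orientation F D \<and>
     (\<forall>u\<in>V. \<forall>v\<in>V. (u, v) \<in> (adj src tgt F)\<^sup>* \<longrightarrow> (u, v) \<in> (darcs src tgt D)\<^sup>*)"

text \<open>A circuit: the set of oriented edges of a closed directed walk with pairwise
distinct edges and pairwise distinct vertices (a cycle oriented as a directed cycle;
loops and pairs of parallel edges included).\<close>
definition is_circuit :: "'e set \<Rightarrow> ('e \<Rightarrow> 'v) \<Rightarrow> ('e \<Rightarrow> 'v) \<Rightarrow> ('e \<times> bool) set \<Rightarrow> bool" where
  "is_circuit E src tgt C \<longleftrightarrow> (\<exists>ds. ds \<noteq> [] \<and> set ds = C \<and> (\<forall>d\<in>set ds. fst d \<in> E) \<and>
     distinct (map fst ds) \<and> distinct (map (otail src tgt) ds) \<and>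
     (\<forall>i<length ds. ohead src tgt (ds ! i) = otail src tgt (ds ! ((i + 1) mod length ds))))"

definition circ_chain :: "('e \<times> bool) set \<Rightarrow> 'e \<Rightarrow> real" where
  "circ_chain C e = (if (e, True) \<in> C then 1 else if (e, False) \<in> C then -1 else 0)"

definition is_vD :: "'v set \<Rightarrow> 'e set \<Rightarrow> ('e \<Rightarrow> 'v) \<Rightarrow> ('e \<Rightarrow> 'v) \<Rightarrow> ('e \<times> bool) set
    \<Rightarrow> ('e \<Rightarrow> real) \<Rightarrow> bool" where
  "is_vD V E src tgt D v \<longleftrightarrow> v \<in> flows V E src tgt \<and>
     (\<forall>C. is_circuit E src tgt C \<and> C \<subseteq> D \<longrightarrow>
        2 * inner_ch E v (circ_chain C) = qf E (circ_chain C))"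

definition vD :: "'v set \<Rightarrow> 'e set \<Rightarrow> ('e \<Rightarrow> 'v) \<Rightarrow> ('e \<Rightarrow> 'v) \<Rightarrow> ('e \<times> bool) set \<Rightarrow> 'e \<Rightarrow> real" where
  "vD V E src tgt D = (THE v. is_vD V E src tgt D v)"

end

theory Submission
  imports Defs
begin

(* The flow space H is spanned by circuit chains, and more precisely every flow y admits a
   conformal decomposition y = \<Sum> \<lambda>_i x^{C_i} with \<lambda>_i > 0 and circuits C_i along which y is
   positive. *)

lemma inner_ch_sym: "inner_ch E x y = inner_ch E y x"
  by (simp add: inner_ch_def mult.commute)

lemma inner_ch_diff_left: "inner_ch E (\<lambda>e. x e - y e) z = inner_ch E x z - inner_ch E y z"
  by (simp add: inner_ch_def left_diff_distrib sum_subtractf)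

lemma inner_ch_scale_left: "inner_ch E (\<lambda>e. c * x e) z = c * inner_ch E x z"
  by (simp add: inner_ch_def sum_distrib_left mult.assoc)

lemma inner_ch_add_right: "inner_ch E z (\<lambda>e. x e + y e) = inner_ch E z x + inner_ch E z y"
  by (simp add: inner_ch_def distrib_left sum.distrib)

lemma inner_ch_diff_right: "inner_ch E z (\<lambda>e. x e - y e) = inner_ch E z x - inner_ch E z y"
  by (simp add: inner_ch_def right_diff_distrib sum_subtractf)

lemma inner_ch_scale_right: "inner_ch E z (\<lambda>e. c * x e) = c * inner_ch E z x"
  by (simp add: inner_ch_def sum_distrib_left mult.left_commute)

lemma inner_ch_sum_list_right:
  "inner_ch E z (\<lambda>e. \<Sum>p\<leftarrow>L. f p e) = (\<Sum>p\<leftarrow>L. inner_ch E z (f p))"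
  by (induction L) (simp_all add: inner_ch_add_right, simp add: inner_ch_def)

lemma qf_zero_iff: "finite E \<Longrightarrow> qf E x = 0 \<longleftrightarrow> (\<forall>e\<in>E. x e = 0)"
  by (simp add: qf_def inner_ch_def sum_nonneg_eq_0_iff)

lemma qf_diff: "qf E (\<lambda>e. x e - y e) = qf E x - 2 * inner_ch E x y + qf E y"
  unfolding qf_def inner_ch_diff_left inner_ch_diff_right by (simp add: inner_ch_sym[of E y x])

lemma inner_le_qf: "2 * inner_ch E x y \<le> qf E x + qf E y"
proof -
  have "0 \<le> qf E (\<lambda>e. x e - y e)" by (simp add: qf_def inner_ch_def sum_nonneg)
  then show ?thesis using qf_diff[of E x y] by linarith
qed

definition rv :: "'e \<times> bool \<Rightarrow> 'e \<times> bool" where "rv d = (fst d, \<not> snd d)"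

lemma rv_rv[simp]: "rv (rv d) = d" by (simp add: rv_def)
lemma fst_rv[simp]: "fst (rv d) = fst d" by (simp add: rv_def)
lemma otail_rv[simp]: "otail s t (rv d) = ohead s t d" by (simp add: rv_def otail_def ohead_def)
lemma ohead_rv[simp]: "ohead s t (rv d) = otail s t d" by (simp add: rv_def otail_def ohead_def)
lemma oval_rv[simp]: "oval x (rv d) = - oval x d" by (simp add: rv_def oval_def)
lemma rv_neq[simp]: "rv d \<noteq> d" by (cases d) (simp add: rv_def)

lemma same_edge_cases: "fst d' = fst d \<Longrightarrow> d' = d \<or> d' = rv d"
  by (cases d; cases d') (auto simp: rv_def)

lemma inj_fst_antisymmetric: "\<forall>d\<in>A. rv d \<notin> A \<Longrightarrow> inj_on fst A"
  by (metis inj_onI same_edge_cases)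

lemma oval_zero[simp]: "oval (\<lambda>e. 0) d = 0" by (simp add: oval_def)
lemma oval_add: "oval (\<lambda>e. x e + y e) d = oval x d + oval y d" by (simp add: oval_def)
lemma oval_diff: "oval (\<lambda>e. x e - y e) d = oval x d - oval y d" by (simp add: oval_def)
lemma oval_scale: "oval (\<lambda>e. c * x e) d = c * oval x d" by (simp add: oval_def)
lemma oval_sum_list: "oval (\<lambda>e. \<Sum>p\<leftarrow>L. f p e) d = (\<Sum>p\<leftarrow>L. oval (f p) d)"
  by (induction L) (simp_all add: oval_add)

lemma oval_circ_chain:
  "\<forall>d\<in>C. rv d \<notin> C \<Longrightarrow> oval (circ_chain C) d = of_bool (d \<in> C) - of_bool (rv d \<in> C)"
  by (cases d; cases "snd d") (auto simp: oval_def circ_chain_def rv_def)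

lemma adj_rtrancl_sym: "(a, b) \<in> (adj s t F)\<^sup>* \<Longrightarrow> (b, a) \<in> (adj s t F)\<^sup>*"
proof -
  have "(adj s t F)\<inverse> = adj s t F" unfolding adj_def by auto
  moreover assume "(a, b) \<in> (adj s t F)\<^sup>*"
  ultimately show ?thesis by (metis converseI rtrancl_converseI)
qed

lemma adj_arc: "fst d \<in> F \<Longrightarrow> (otail s t d, ohead s t d) \<in> adj s t F"
  unfolding adj_def otail_def ohead_def by (cases d; cases "snd d") auto

lemma adj_eq_darcs: "adj s t F = darcs s t (F \<times> UNIV)"
proof
  show "adj s t F \<subseteq> darcs s t (F \<times> UNIV)"
  proof
    fix p assume "p \<in> adj s t F"
    then obtain e where e: "e \<in> F" "p = (s e, t e) \<or> p = (t e, s e)" unfolding adj_def by blast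
    then have "p = (otail s t (e, True), ohead s t (e, True)) \<or> p = (otail s t (e, False), ohead s t (e, False))"
      by (auto simp: otail_def ohead_def)
    then show "p \<in> darcs s t (F \<times> UNIV)" unfolding darcs_def using e(1) by blast
  qed
  show "darcs s t (F \<times> UNIV) \<subseteq> adj s t F"
    unfolding darcs_def using adj_arc by fastforce
qed

lemma darcs_mono: "D \<subseteq> D' \<Longrightarrow> darcs s t D \<subseteq> darcs s t D'"
  unfolding darcs_def by blast

lemma darcs_arc: "d \<in> D \<Longrightarrow> (otail s t d, ohead s t d) \<in> darcs s t D"
  unfolding darcs_def by blast

lemma mod_shift_ne: "k < n \<Longrightarrow> Suc m < n \<Longrightarrow> (k + 1 + m) mod n \<noteq> (k::nat)"
proof
  assume a: "k < n" "Suc m < n" "(k + 1 + m) mod n = k"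
  show False
  proof (cases "k + 1 + m < n")
    case True then show ?thesis using a by simp
  next
    case False
    then have "(k + 1 + m) mod n = (k + 1 + m - n) mod n" by (simp add: le_mod_geq)
    also have "\<dots> = k + 1 + m - n" using a False by simp
    finally show ?thesis using a False by arith
  qed
qed

lemma mod_succ_inj: "(i::nat) < n \<Longrightarrow> j < n \<Longrightarrow> (i + 1) mod n = (j + 1) mod n \<Longrightarrow> i = j"
proof -
  assume a: "i < n" "j < n" "(i + 1) mod n = (j + 1) mod n"
  have h: "x < n \<Longrightarrow> (x + 1) mod n = (if x + 1 = n then 0 else x + 1)" for x :: nat by auto
  show "i = j" using a h[of i] h[of j] by (auto split: if_splits)
qed

lemma distinct_map_nth_inj:
  "distinct (map f xs) \<Longrightarrow> i < length xs \<Longrightarrow> j < length xs \<Longrightarrow> f (xs ! i) = f (xs ! j) \<Longrightarrow> i = j"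
  using nth_eq_iff_index_eq[of "map f xs" i j] by simp

lemma cyclic_list_closure:
  assumes ne: "ds \<noteq> []"
    and cl: "\<forall>i<length ds. ohead s t (ds ! i) = otail s t (ds ! ((i + 1) mod length ds))"
    and k: "k < length ds"
    and R: "\<And>j. j < length ds \<Longrightarrow> j \<noteq> k \<Longrightarrow> (otail s t (ds ! j), ohead s t (ds ! j)) \<in> R"
  shows "(ohead s t (ds ! k), otail s t (ds ! k)) \<in> R\<^sup>*"
proof -
  let ?n = "length ds"
  have n: "?n > 0" using ne by simp
  have walk: "(otail s t (ds ! ((k + 1) mod ?n)), otail s t (ds ! ((k + 1 + m) mod ?n))) \<in> R\<^sup>*"
    if "m < ?n" for m
    using that
  proof (induction m)
    case 0 then show ?case by simp
  next
    case (Suc m)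
    let ?j = "(k + 1 + m) mod ?n"
    have j: "?j < ?n" using n by simp
    have "(otail s t (ds ! ?j), ohead s t (ds ! ?j)) \<in> R"
      using R[OF j mod_shift_ne[OF k Suc.prems]] .
    moreover have "ohead s t (ds ! ?j) = otail s t (ds ! ((k + 1 + Suc m) mod ?n))"
      using cl j by (simp add: mod_Suc_eq)
    ultimately show ?case using Suc by (metis Suc_lessD rtrancl_into_rtrancl)
  qed
  have "(k + 1 + (?n - 1)) mod ?n = k" using n k by simp
  then show ?thesis using walk[of "?n - 1"] n cl k by simp
qed

lemma card_fiber_inj: "inj_on f A \<Longrightarrow> card {d\<in>A. f d = v} = card (f ` A \<inter> {v})"
proof -
  assume i: "inj_on f A"
  have "f ` {d\<in>A. f d = v} = f ` A \<inter> {v}" by auto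
  moreover have "inj_on f {d\<in>A. f d = v}" using i by (rule inj_on_subset) auto
  ultimately show ?thesis by (metis card_image)
qed

(* A finite multigraph. *)
locale graph =
  fixes V :: "'v set" and E :: "'e set" and src tgt :: "'e \<Rightarrow> 'v"
  assumes finE: "finite E" and endsV: "\<forall>e\<in>E. src e \<in> V \<and> tgt e \<in> V"
begin

abbreviation "ta \<equiv> otail src tgt"
abbreviation "he \<equiv> ohead src tgt"
abbreviation "H \<equiv> flows V E src tgt"
abbreviation "\<Lambda> \<equiv> int_flows V E src tgt"
abbreviation "circuit \<equiv> is_circuit E src tgt"
abbreviation "BL \<equiv> bridgeless_edges E src tgt"

definition Out :: "'v \<Rightarrow> ('e \<times> bool) set" where "Out v = {d \<in> E \<times> UNIV. ta d = v}"

lemma finite_Out[simp]: "finite (Out v)"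
proof -
  have "finite (E \<times> (UNIV::bool set))" using finE by simp
  then show ?thesis unfolding Out_def by (rule finite_subset[rotated]) auto
qed

lemma ta_V: "fst d \<in> E \<Longrightarrow> ta d \<in> V" using endsV by (auto simp: otail_def)
lemma he_V: "fst d \<in> E \<Longrightarrow> he d \<in> V" using endsV by (auto simp: ohead_def)

lemma flow_iff: "x \<in> H \<longleftrightarrow> (\<forall>e. e \<notin> E \<longrightarrow> x e = 0) \<and> (\<forall>v\<in>V. (\<Sum>d\<in>Out v. oval x d) = 0)"
  by (simp add: flows_def is_flow_def Out_def)

lemma flow_zero: "(\<lambda>e. 0) \<in> H"
  by (simp add: flow_iff)
lemma flow_add: "x \<in> H \<Longrightarrow> y \<in> H \<Longrightarrow> (\<lambda>e. x e + y e) \<in> H"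
  by (simp add: flow_iff oval_add sum.distrib)
lemma flow_diff: "x \<in> H \<Longrightarrow> y \<in> H \<Longrightarrow> (\<lambda>e. x e - y e) \<in> H"
  by (simp add: flow_iff oval_diff sum_subtractf)
lemma flow_scale: "x \<in> H \<Longrightarrow> (\<lambda>e. c * x e) \<in> H"
  by (simp add: flow_iff oval_scale flip: sum_distrib_left)
lemma flow_sum_list: "(\<And>p. p \<in> set L \<Longrightarrow> f p \<in> H) \<Longrightarrow> (\<lambda>e. \<Sum>p\<leftarrow>L. f p e) \<in> H"
proof (induction L)
  case Nil then show ?case using flow_zero by simp
next
  case (Cons a L) then show ?case using flow_add[of "f a" "\<lambda>e. \<Sum>p\<leftarrow>L. f p e"] by simp
qed

lemma flow_outside: "x \<in> H \<Longrightarrow> e \<notin> E \<Longrightarrow> x e = 0"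
  by (simp add: flow_iff)

end

context graph
begin

lemma circuitE:
  assumes "circuit C"
  obtains ds where "ds \<noteq> []" "set ds = C" "\<forall>d\<in>set ds. fst d \<in> E" "distinct (map fst ds)"
    "distinct (map ta ds)" "\<forall>i<length ds. he (ds ! i) = ta (ds ! ((i + 1) mod length ds))"
  using assms unfolding is_circuit_def by blast

lemma circuit_E: "circuit C \<Longrightarrow> d \<in> C \<Longrightarrow> fst d \<in> E"
  by (erule circuitE) auto

lemma finite_circuits: "finite {C. circuit C}"
proof -
  have "{C. circuit C} \<subseteq> Pow (E \<times> UNIV)" using circuit_E by fastforce
  moreover have "finite (Pow (E \<times> (UNIV :: bool set)))" using finE by simp
  ultimately show ?thesis by (rule finite_subset)
qed

lemma circuit_inj_fst: "circuit C \<Longrightarrow> inj_on fst C"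
  by (erule circuitE) (metis distinct_map)

lemma circuit_rv: "circuit C \<Longrightarrow> d \<in> C \<Longrightarrow> rv d \<notin> C"
  by (metis circuit_inj_fst fst_rv inj_on_eq_iff rv_neq)

lemma circuit_inj_ta: "circuit C \<Longrightarrow> inj_on ta C"
  by (erule circuitE) (metis distinct_map)

lemma circuit_he:
  assumes "circuit C"
  shows "inj_on he C" "he ` C = ta ` C"
proof -
  obtain ds where ds: "ds \<noteq> []" "set ds = C" "distinct (map ta ds)"
    "\<forall>i<length ds. he (ds ! i) = ta (ds ! ((i + 1) mod length ds))"
    using assms by (rule circuitE) blast
  let ?n = "length ds"
  show inj: "inj_on he C"
  proof
    fix x y assume "x \<in> C" "y \<in> C" "he x = he y"
    then obtain i j where ij: "i < ?n" "j < ?n" "x = ds ! i" "y = ds ! j"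
      using ds(2) by (metis in_set_conv_nth)
    have "ta (ds ! ((i + 1) mod ?n)) = ta (ds ! ((j + 1) mod ?n))"
      using ds(4) ij \<open>he x = he y\<close> by metis
    then have "(i + 1) mod ?n = (j + 1) mod ?n"
      using distinct_map_nth_inj[OF ds(3)] ds(1) by simp
    then show "x = y" using mod_succ_inj ij by blast
  qed
  have "he ` C \<subseteq> ta ` C"
  proof
    fix z assume "z \<in> he ` C"
    then obtain i where i: "i < ?n" "z = he (ds ! i)" using ds(2) by (metis imageE in_set_conv_nth)
    then have "z = ta (ds ! ((i + 1) mod ?n))" using ds(4) by simp
    moreover have "(i + 1) mod ?n < ?n" using ds(1) by simp
    ultimately show "z \<in> ta ` C" using ds(2) by (metis image_eqI nth_mem)
  qed
  moreover have "card (he ` C) = card (ta ` C)"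
    using card_image[OF inj] card_image[OF circuit_inj_ta[OF assms]] by simp
  moreover have "finite (ta ` C)" using ds(2) by auto
  ultimately show "he ` C = ta ` C" by (simp add: card_subset_eq)
qed

(* The chain of a circuit is a flow: at each vertex it has as many outgoing as
   incoming oriented edges. *)
lemma circ_flow:
  assumes c: "circuit C"
  shows "circ_chain C \<in> H"
proof -
  have rvC: "\<forall>d\<in>C. rv d \<notin> C" using circuit_rv[OF c] by blast
  have out: "circ_chain C e = 0" if "e \<notin> E" for e
    using circuit_E[OF c, of "(e,True)"] circuit_E[OF c, of "(e,False)"] that
    by (auto simp: circ_chain_def)
  have cons: "(\<Sum>d\<in>Out v. oval (circ_chain C) d) = 0" for v
  proof -
    have leaving: "Out v \<inter> {d. d \<in> C} = {d\<in>C. ta d = v}"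
      using circuit_E[OF c] by (auto simp: Out_def)
    have entering: "Out v \<inter> {d. rv d \<in> C} = rv ` {d\<in>C. he d = v}"
    proof
      show "Out v \<inter> {d. rv d \<in> C} \<subseteq> rv ` {d\<in>C. he d = v}"
        unfolding Out_def by (auto intro!: image_eqI[where x="rv _"])
      show "rv ` {d\<in>C. he d = v} \<subseteq> Out v \<inter> {d. rv d \<in> C}"
        using circuit_E[OF c] unfolding Out_def by (auto simp: mem_Times_iff)
    qed
    have "(\<Sum>d\<in>Out v. oval (circ_chain C) d)
        = (\<Sum>d\<in>Out v. of_bool (d \<in> C)) - (\<Sum>d\<in>Out v. of_bool (rv d \<in> C))"
      using oval_circ_chain[OF rvC] by (simp add: sum_subtractf)
    also have "\<dots> = real (card {d\<in>C. ta d = v}) - real (card (rv ` {d\<in>C. he d = v}))"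
      by (simp flip: leaving entering)
    also have "card (rv ` {d\<in>C. he d = v}) = card {d\<in>C. he d = v}"
      by (rule card_image) (metis inj_on_inverseI rv_rv)
    also have "card {d\<in>C. he d = v} = card {d\<in>C. ta d = v}"
      using card_fiber_inj[OF circuit_he(1)[OF c]] card_fiber_inj[OF circuit_inj_ta[OF c]]
        circuit_he(2)[OF c] by simp
    finally show ?thesis by simp
  qed
  show ?thesis unfolding flow_iff using out cons by blast
qed

lemma circuit_reach:
  assumes c: "circuit C" and d: "d \<in> C"
    and R: "\<And>d'. d' \<in> C \<Longrightarrow> fst d' \<noteq> fst d \<Longrightarrow> (ta d', he d') \<in> R"
  shows "(he d, ta d) \<in> R\<^sup>*"
proof -
  obtain ds where ds: "ds \<noteq> []" "set ds = C" "distinct (map fst ds)"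
    "\<forall>i<length ds. he (ds ! i) = ta (ds ! ((i + 1) mod length ds))"
    using c by (rule circuitE) blast
  obtain k where k: "k < length ds" "d = ds ! k" using d ds(2) by (metis in_set_conv_nth)
  have "(he (ds ! k), ta (ds ! k)) \<in> R\<^sup>*"
  proof (rule cyclic_list_closure[OF ds(1) ds(4) k(1)])
    fix j assume j: "j < length ds" "j \<noteq> k"
    then have "fst (ds ! j) \<noteq> fst (ds ! k)" using distinct_map_nth_inj[OF ds(3)] k(1) by blast
    then show "(ta (ds ! j), he (ds ! j)) \<in> R" using R[of "ds ! j"] j ds(2) k nth_mem by blast
  qed
  then show ?thesis using k by simp
qed

lemma circuit_reach_self: "circuit C \<Longrightarrow> d \<in> C \<Longrightarrow> (he d, ta d) \<in> (darcs src tgt C)\<^sup>*"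
  by (rule circuit_reach) (auto simp: darcs_def)

lemma circuit_not_bridge:
  assumes c: "circuit C" and d: "d \<in> C"
  shows "fst d \<in> BL"
proof -
  let ?f = "fst d"
  have "(he d, ta d) \<in> (adj src tgt (E - {?f}))\<^sup>*"
    by (rule circuit_reach[OF c d]) (rule adj_arc, use circuit_E[OF c] in auto)
  then have "(ta d, he d) \<in> (adj src tgt (E - {?f}))\<^sup>*" "(he d, ta d) \<in> (adj src tgt (E - {?f}))\<^sup>*"
    using adj_rtrancl_sym by auto
  then have "(src ?f, tgt ?f) \<in> (adj src tgt (E - {?f}))\<^sup>*"
    by (cases "snd d") (auto simp: otail_def ohead_def)
  then show ?thesis using circuit_E[OF c d] by (simp add: bridgeless_edges_def is_bridge_def)
qed

end

lemma first_repetition: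
  fixes g :: "nat \<Rightarrow> 'a"
  assumes "finite (range g)"
  shows "\<exists>i J. i < J \<and> g i = g J \<and> inj_on g {..<J}"
proof -
  have "\<not> inj g" using finite_imageD[OF assms] infinite_UNIV_nat by blast
  then obtain a b where "a \<noteq> b" "g a = g b" unfolding inj_def by blast
  then have ex: "\<exists>j. \<exists>i<j. g i = g j" by (metis linorder_neqE_nat)
  define J where "J = (LEAST j. \<exists>i<j. g i = g j)"
  have no_earlier: "\<not> (\<exists>i<j. g i = g j)" if "j < J" for j
    using not_less_Least that unfolding J_def by blast
  obtain i where "i < J" "g i = g J" using LeastI_ex[OF ex] unfolding J_def by blast
  moreover have "inj_on g {..<J}"
  proof
    fix a b assume "a \<in> {..<J}" "b \<in> {..<J}" "g a = g b"
    then show "a = b" using no_earlier by (metis lessThan_iff linorder_neqE_nat)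
  qed
  ultimately show ?thesis by blast
qed

context graph
begin

fun walk :: "'v \<Rightarrow> ('e \<times> bool) list \<Rightarrow> 'v \<Rightarrow> bool" where
  "walk x [] y = (x = y)"
| "walk x (d # ds) y = (ta d = x \<and> walk (he d) ds y)"

lemma walk_snoc: "walk x (ds @ [d]) z \<longleftrightarrow> walk x ds (ta d) \<and> he d = z"
  by (induction ds arbitrary: x) auto

lemma walk_take: "walk x ds y \<Longrightarrow> k < length ds \<Longrightarrow> walk x (take k ds) (ta (ds ! k))"
proof (induction ds arbitrary: x k)
  case Nil then show ?case by simp
next
  case (Cons d ds) then show ?case by (cases k) auto
qed

lemma walk_he:
  "walk x ds y \<Longrightarrow> i < length ds \<Longrightarrow> he (ds ! i) = (if Suc i < length ds then ta (ds ! Suc i) else y)"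
proof (induction ds arbitrary: x i)
  case Nil then show ?case by simp
next
  case (Cons d ds) then show ?case by (cases i; cases ds) auto
qed

lemma simple_walk:
  assumes "(x, y) \<in> (darcs src tgt A)\<^sup>*"
  shows "\<exists>ds. walk x ds y \<and> set ds \<subseteq> A \<and> distinct (map ta ds) \<and> y \<notin> ta ` set ds"
  using assms
proof (induction rule: rtrancl_induct)
  case base
  then show ?case by (intro exI[of _ "[]"]) auto
next
  case (step y z)
  obtain ds where ds: "walk x ds y" "set ds \<subseteq> A" "distinct (map ta ds)" "y \<notin> ta ` set ds"
    using step.IH by blast
  obtain d where d: "d \<in> A" "ta d = y" "he d = z" using step.hyps(2) unfolding darcs_def by blast
  consider (revisit) "z \<in> ta ` set ds" | (stay) "z = y" | (new) "z \<notin> ta ` set ds" "z \<noteq> y"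
    by blast
  then show ?case
  proof cases
    case revisit
    then obtain k where k: "k < length ds" "z = ta (ds ! k)" by (metis imageE in_set_conv_nth)
    have "z \<notin> ta ` set (take k ds)"
    proof
      assume "z \<in> ta ` set (take k ds)"
      then obtain i where i: "i < k" "z = ta (ds ! i)" using k(1)
        by (auto simp: in_set_conv_nth)
      then show False using distinct_map_nth_inj[OF ds(3), of i k] k by simp
    qed
    moreover have "walk x (take k ds) z" using walk_take[OF ds(1) k(1)] k(2) by simp
    moreover have "distinct (map ta (take k ds))" using ds(3) by (simp add: take_map[symmetric])
    ultimately show ?thesis using ds(2) by (intro exI[of _ "take k ds"]) (auto dest: in_set_takeD)
  next
    case stay
    then show ?thesis using ds by blast
  next
    case new
    have "walk x (ds @ [d]) z" using ds(1) d by (simp add: walk_snoc)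
    then show ?thesis using ds new d by (intro exI[of _ "ds @ [d]"]) auto
  qed
qed

lemma simple_walk_distinct_edges:
  assumes p: "walk x ds y" and dt: "distinct (map ta ds)" and ny: "y \<notin> ta ` set ds"
  shows "distinct (map fst ds)"
proof -
  have "\<not> (i < j \<and> j < length ds \<and> fst (ds ! i) = fst (ds ! j))" for i j
  proof
    assume h: "i < j \<and> j < length ds \<and> fst (ds ! i) = fst (ds ! j)"
    have "ds ! j \<noteq> ds ! i" using distinct_map_nth_inj[OF dt, of i j] h by auto
    then have rj: "ds ! j = rv (ds ! i)" using h same_edge_cases by metis
    have "ta (ds ! j) = ta (ds ! Suc i)" using walk_he[OF p, of i] h rj by auto
    then have j: "j = Suc i" using distinct_map_nth_inj[OF dt, of j "Suc i"] h by simp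
    show False
    proof (cases "Suc j < length ds")
      case True
      then have "ta (ds ! Suc j) = ta (ds ! i)" using walk_he[OF p, of j] h rj by simp
      then show False using distinct_map_nth_inj[OF dt, of "Suc j" i] True h j by simp
    next
      case False
      then have "y = ta (ds ! i)" using walk_he[OF p, of j] h rj by simp
      then show False using ny h by auto
    qed
  qed
  then show ?thesis unfolding distinct_conv_nth by (metis length_map linorder_neqE_nat nth_map)
qed

lemma closed_walk_circuit:
  assumes p: "walk x cs x" and ne: "cs \<noteq> []" and dt: "distinct (map ta cs)"
    and df: "distinct (map fst cs)" and E: "\<forall>d\<in>set cs. fst d \<in> E"
  shows "circuit (set cs)"
proof -
  have start: "ta (cs ! 0) = x" using p ne by (cases cs) auto
  have "he (cs ! i) = ta (cs ! ((i + 1) mod length cs))" if i: "i < length cs" for i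
  proof (cases "Suc i < length cs")
    case True then show ?thesis using walk_he[OF p i] by simp
  next
    case False
    then have "Suc i = length cs" using i by simp
    then show ?thesis using walk_he[OF p i] start by simp
  qed
  then show ?thesis unfolding is_circuit_def using ne dt df E by blast
qed

lemma walk_iterate:
  assumes "\<And>k. ta (f (Suc k)) = he (f k)"
  shows "walk (ta (f i)) (map f [i..<i + n]) (ta (f (i + n)))"
proof (induction n arbitrary: i)
  case 0 then show ?case by simp
next
  case (Suc n)
  have "[i..<i + Suc n] = i # [Suc i..<Suc i + n]" by (simp add: upt_conv_Cons)
  then show ?case using Suc[of "Suc i"] assms by simp
qed

(* A finite nonempty set of oriented edges without opposite pairs, in which every edge
   can be continued by another one, contains a circuit: follow successors until a vertex
   repeats. *)
lemma find_circuit: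
  assumes fin: "finite A" and ne: "A \<noteq> {}" and sub: "A \<subseteq> E \<times> UNIV"
    and rvA: "\<forall>d\<in>A. rv d \<notin> A" and succ: "\<forall>d\<in>A. \<exists>d'\<in>A. ta d' = he d"
  shows "\<exists>C. circuit C \<and> C \<subseteq> A"
proof -
  obtain s where s: "\<forall>d\<in>A. s d \<in> A \<and> ta (s d) = he d" using succ by metis
  obtain d0 where d0: "d0 \<in> A" using ne by blast
  define f where "f k = (s ^^ k) d0" for k
  have fA: "f k \<in> A" for k by (induction k) (auto simp: f_def d0 s)
  have next_arc: "ta (f (Suc k)) = he (f k)" for k using fA s by (simp add: f_def)
  have "range (\<lambda>k. ta (f k)) \<subseteq> ta ` A" using fA by blast
  then have "finite (range (\<lambda>k. ta (f k)))" using fin by (rule finite_subset[OF _ finite_imageI])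
  then obtain i J where iJ: "i < J" "ta (f i) = ta (f J)" "inj_on (\<lambda>k. ta (f k)) {..<J}"
    by (blast dest: first_repetition)
  define cs where "cs = map f [i..<J]"
  have closed: "walk (ta (f i)) cs (ta (f i))"
    using walk_iterate[of f i "J - i", OF next_arc] iJ(1,2) by (simp add: cs_def)
  have "map ta cs = map (\<lambda>k. ta (f k)) [i..<J]" by (simp add: cs_def)
  then have dt: "distinct (map ta cs)"
    using inj_on_subset[OF iJ(3)] by (simp add: distinct_map subset_eq)
  have csA: "set cs \<subseteq> A" using fA by (auto simp: cs_def)
  have df: "distinct (map fst cs)"
    using dt inj_on_subset[OF inj_fst_antisymmetric[OF rvA] csA] by (simp add: distinct_map)
  have "cs \<noteq> []" using iJ(1) by (simp add: cs_def)
  moreover have "\<forall>d\<in>set cs. fst d \<in> E" using csA sub by auto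
  ultimately have "circuit (set cs)" using closed_walk_circuit[OF closed _ dt df] by blast
  then show ?thesis using csA by blast
qed

end

lemma sum_zero_has_pos:
  "finite S \<Longrightarrow> x \<in> S \<Longrightarrow> f x < 0 \<Longrightarrow> sum f S = (0::real) \<Longrightarrow> \<exists>x'\<in>S. f x' > 0"
proof (rule ccontr)
  assume h: "finite S" "x \<in> S" "f x < 0" "sum f S = 0" "\<not> (\<exists>x'\<in>S. f x' > 0)"
  have "sum f S = f x + sum f (S - {x})" using h by (simp add: sum.remove)
  moreover have "sum f (S - {x}) \<le> 0" using h(5) by (intro sum_nonpos) (simp add: not_less)
  ultimately show False using h by linarith
qed

context graph
begin

definition pos :: "('e \<Rightarrow> real) \<Rightarrow> ('e \<times> bool) set" where
  "pos y = {d \<in> E \<times> UNIV. oval y d > 0}"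

definition supp :: "('e \<Rightarrow> real) \<Rightarrow> 'e set" where
  "supp y = {e\<in>E. y e \<noteq> 0}"

lemma pos_antisymmetric: "d \<in> pos y \<Longrightarrow> rv d \<notin> pos y"
  by (simp add: pos_def)

lemma finite_pos: "finite (pos y)"
  unfolding pos_def using finE by (auto intro: finite_subset[of _ "E \<times> UNIV"])

(* A nonzero flow has a circuit along which it is positive: by conservation every
   positive oriented edge is followed by another one. *)
lemma pos_circuit:
  assumes yH: "y \<in> H" and ne: "supp y \<noteq> {}"
  shows "\<exists>C. circuit C \<and> C \<subseteq> pos y"
proof (rule find_circuit)
  obtain e0 where "e0 \<in> E" "y e0 \<noteq> 0" using ne by (auto simp: supp_def)
  then have "(e0, y e0 > 0) \<in> pos y" by (auto simp: pos_def oval_def)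
  then show "pos y \<noteq> {}" by blast
  show "\<forall>d\<in>pos y. \<exists>d'\<in>pos y. ta d' = he d"
  proof
    fix d assume d: "d \<in> pos y"
    then have fe: "fst d \<in> E" by (auto simp: pos_def)
    then have "(\<Sum>d'\<in>Out (he d). oval y d') = 0" using yH he_V by (simp add: flow_iff)
    moreover have "rv d \<in> Out (he d)" using fe by (auto simp: Out_def mem_Times_iff)
    moreover have "oval y (rv d) < 0" using d by (simp add: pos_def)
    ultimately obtain d' where "d' \<in> Out (he d)" "oval y d' > 0"
      using sum_zero_has_pos[OF finite_Out] by blast
    then show "\<exists>d'\<in>pos y. ta d' = he d" by (auto simp: Out_def pos_def)
  qed
qed (use finite_pos pos_antisymmetric in \<open>auto simp: pos_def\<close>)

(* Subtracting the largest admissible multiple of a positive circuit from a flow keeps it a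
   flow, does not create new positive edges, and shrinks its support. *)
lemma cancel_circuit:
  assumes yH: "y \<in> H" and C: "circuit C" "C \<subseteq> pos y"
  shows "\<exists>\<alpha>>0. (\<lambda>e. y e - \<alpha> * circ_chain C e) \<in> H
              \<and> pos (\<lambda>e. y e - \<alpha> * circ_chain C e) \<subseteq> pos y
              \<and> supp (\<lambda>e. y e - \<alpha> * circ_chain C e) \<subset> supp y"
proof -
  have finC: "finite C" and neC: "C \<noteq> {}" using C(1) by (auto elim!: circuitE)
  define \<alpha> where "\<alpha> = Min (oval y ` C)"
  have \<alpha>pos: "\<alpha> > 0" unfolding \<alpha>_def using finC neC C(2) by (auto simp: pos_def)
  obtain dm where dm: "dm \<in> C" "oval y dm = \<alpha>" unfolding \<alpha>_def using finC neC
    by (metis (mono_tags, lifting) Min_in empty_is_image finite_imageI imageE)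
  have \<alpha>le: "d \<in> C \<Longrightarrow> \<alpha> \<le> oval y d" for d unfolding \<alpha>_def using finC by simp
  define y' where "y' = (\<lambda>e. y e - \<alpha> * circ_chain C e)"
  have rvC: "\<forall>d\<in>C. rv d \<notin> C" using circuit_rv[OF C(1)] by blast
  have ov: "oval y' d = oval y d - \<alpha> * (of_bool (d \<in> C) - of_bool (rv d \<in> C))" for d
    unfolding y'_def oval_diff oval_scale oval_circ_chain[OF rvC] ..
  have "y' \<in> H" unfolding y'_def using flow_diff[OF yH flow_scale[OF circ_flow[OF C(1)]]] .
  moreover have "pos y' \<subseteq> pos y"
  proof
    fix d assume d: "d \<in> pos y'"
    consider "d \<in> C" | "rv d \<in> C" | "d \<notin> C" "rv d \<notin> C" by blast
    then show "d \<in> pos y"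
    proof cases
      case 1 then show ?thesis using C(2) by blast
    next
      case 2
      then have "oval y' d \<le> 0" using ov[of d] \<alpha>le[of "rv d"] rvC by auto
      then show ?thesis using d by (simp add: pos_def)
    next
      case 3
      then show ?thesis using d ov[of d] by (simp add: pos_def)
    qed
  qed
  moreover have "supp y' \<subset> supp y"
  proof
    have "circ_chain C e = 0" if "y e = 0" for e
      using that C(2) by (auto simp: circ_chain_def pos_def oval_def)
    then show "supp y' \<subseteq> supp y" by (auto simp: supp_def y'_def)
    have "oval y' dm = 0" using ov[of dm] dm rvC by auto
    moreover have "oval y dm \<noteq> 0" using dm \<alpha>pos by simp
    moreover have "fst dm \<in> E" using dm C(2) by (auto simp: pos_def)
    ultimately show "supp y' \<noteq> supp y" by (auto simp: supp_def oval_def split: if_splits)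
  qed
  ultimately show ?thesis using \<alpha>pos unfolding y'_def by blast
qed

lemma conformal_decomposition:
  assumes "y \<in> H"
  shows "\<exists>L. (\<forall>p\<in>set L. fst p > 0 \<and> circuit (snd p) \<and> snd p \<subseteq> pos y) \<and>
             y = (\<lambda>e. \<Sum>p\<leftarrow>L. fst p * circ_chain (snd p) e)"
  using assms
proof (induction "card (supp y)" arbitrary: y rule: less_induct)
  case less
  show ?case
  proof (cases "supp y = {}")
    case True
    then have "y = (\<lambda>e. 0)" using flow_outside[OF less.prems] by (auto simp: supp_def)
    then show ?thesis by (intro exI[of _ "[]"]) auto
  next
    case False
    obtain C where C: "circuit C" "C \<subseteq> pos y" using pos_circuit[OF less.prems False] by blast
    obtain \<alpha> where \<alpha>: "\<alpha> > 0" "(\<lambda>e. y e - \<alpha> * circ_chain C e) \<in> H"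
      "pos (\<lambda>e. y e - \<alpha> * circ_chain C e) \<subseteq> pos y"
      "supp (\<lambda>e. y e - \<alpha> * circ_chain C e) \<subset> supp y"
      using cancel_circuit[OF less.prems C] by blast
    have "card (supp (\<lambda>e. y e - \<alpha> * circ_chain C e)) < card (supp y)"
      using \<alpha>(4) finE by (simp add: psubset_card_mono supp_def)
    then obtain L where L: "\<forall>p\<in>set L. fst p > 0 \<and> circuit (snd p) \<and> snd p \<subseteq> pos y"
      "(\<lambda>e. y e - \<alpha> * circ_chain C e) = (\<lambda>e. \<Sum>p\<leftarrow>L. fst p * circ_chain (snd p) e)"
      using less.hyps \<alpha>(2,3) by (meson order_trans)
    have "y = (\<lambda>e. \<Sum>p\<leftarrow>(\<alpha>, C) # L. fst p * circ_chain (snd p) e)"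
    proof
      fix e show "y e = (\<Sum>p\<leftarrow>(\<alpha>, C) # L. fst p * circ_chain (snd p) e)"
        using fun_cong[OF L(2), of e] by simp
    qed
    then show ?thesis using L(1) \<alpha>(1) C by (intro exI[of _ "(\<alpha>, C) # L"]) auto
  qed
qed

lemma conformal_inner_mono:
  assumes y: "y \<in> H"
    and le: "\<And>C. circuit C \<Longrightarrow> C \<subseteq> pos y \<Longrightarrow> inner_ch E a (circ_chain C) \<le> inner_ch E b (circ_chain C)"
  shows "inner_ch E a y \<le> inner_ch E b y"
proof -
  obtain L where L: "\<forall>p\<in>set L. fst p > 0 \<and> circuit (snd p) \<and> snd p \<subseteq> pos y"
    "y = (\<lambda>e. \<Sum>p\<leftarrow>L. fst p * circ_chain (snd p) e)"
    using conformal_decomposition[OF y] by blast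
  have expand: "inner_ch E c y = (\<Sum>p\<leftarrow>L. fst p * inner_ch E c (circ_chain (snd p)))" for c
    by (subst L(2)) (simp add: inner_ch_sum_list_right inner_ch_scale_right)
  have "(\<Sum>p\<leftarrow>L. fst p * inner_ch E a (circ_chain (snd p)))
      \<le> (\<Sum>p\<leftarrow>L. fst p * inner_ch E b (circ_chain (snd p)))"
    using L(1) le by (intro sum_list_mono mult_left_mono) auto
  then show ?thesis by (simp only: expand)
qed

lemma conformal_orth:
  assumes "y \<in> H" and "\<And>C. circuit C \<Longrightarrow> C \<subseteq> pos y \<Longrightarrow> inner_ch E z (circ_chain C) = 0"
  shows "inner_ch E z y = 0"
proof -
  have zero: "inner_ch E (\<lambda>e. 0) x = 0" for x by (simp add: inner_ch_def)
  show ?thesis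
    using conformal_inner_mono[OF assms(1), of z "\<lambda>e. 0"] conformal_inner_mono[OF assms(1), of "\<lambda>e. 0" z]
    by (simp add: assms(2) zero)
qed

lemma pos_in_circuit:
  assumes y: "y \<in> H" and d: "d \<in> pos y"
  shows "\<exists>C. circuit C \<and> C \<subseteq> pos y \<and> d \<in> C"
proof (rule ccontr)
  assume nex: "\<not> ?thesis"
  obtain L where L: "\<forall>p\<in>set L. fst p > 0 \<and> circuit (snd p) \<and> snd p \<subseteq> pos y"
    "y = (\<lambda>e. \<Sum>p\<leftarrow>L. fst p * circ_chain (snd p) e)"
    using conformal_decomposition[OF y] by blast
  have "oval (circ_chain C) d = 0" if "circuit C" "C \<subseteq> pos y" for C
  proof -
    have "d \<notin> C" using nex that by blast
    moreover have "rv d \<notin> C" using pos_antisymmetric[OF d] that(2) by blast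
    ultimately show ?thesis using oval_circ_chain[of C d] circuit_rv[OF that(1)] by simp
  qed
  then have "oval (\<lambda>e. fst p * circ_chain (snd p) e) d = 0" if "p \<in> set L" for p
    using L(1) that by (simp add: oval_scale)
  then have "(\<Sum>p\<leftarrow>L. oval (\<lambda>e. fst p * circ_chain (snd p) e) d) = (\<Sum>p\<leftarrow>L. 0)"
    by (intro arg_cong[where f=sum_list] map_cong) auto
  then have "oval y d = 0" by (subst L(2)) (simp add: oval_sum_list)
  then show False using d by (simp add: pos_def)
qed

lemma flow_bridge: "y \<in> H \<Longrightarrow> e \<notin> BL \<Longrightarrow> y e = 0"
proof (rule ccontr)
  assume h: "y \<in> H" "e \<notin> BL" "y e \<noteq> 0"
  then have "e \<in> E" using flow_outside by blast
  then have "(e, y e > 0) \<in> pos y" using h(3) by (auto simp: pos_def oval_def)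
  then obtain C where "circuit C" "(e, y e > 0) \<in> C" using pos_in_circuit[OF h(1)] by blast
  then show False using circuit_not_bridge h(2) by fastforce
qed

end

context graph
begin

lemma close_circuit:
  assumes dE: "fst d \<in> E" and A: "A \<subseteq> E \<times> UNIV" and rvd: "rv d \<notin> A"
    and return: "(he d, ta d) \<in> (darcs src tgt A)\<^sup>*"
  shows "\<exists>C. circuit C \<and> d \<in> C \<and> C \<subseteq> insert d A"
proof -
  obtain ds where ds: "walk (he d) ds (ta d)" "set ds \<subseteq> A" "distinct (map ta ds)"
    "ta d \<notin> ta ` set ds"
    using simple_walk[OF return] by blast
  have "d \<notin> set ds" using ds(4) by blast
  have "fst d \<notin> fst ` set ds"
  proof
    assume "fst d \<in> fst ` set ds"
    then obtain d' where "d' \<in> set ds" "fst d' = fst d" by auto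
    then show False using same_edge_cases \<open>d \<notin> set ds\<close> ds(2) rvd by blast
  qed
  then have "distinct (map fst (d # ds))"
    using simple_walk_distinct_edges[OF ds(1,3,4)] by simp
  moreover have "walk (ta d) (d # ds) (ta d)" using ds(1) by simp
  moreover have "distinct (map ta (d # ds))" using ds(3,4) by simp
  moreover have "\<forall>d'\<in>set (d # ds). fst d' \<in> E" using dE ds(2) A by auto
  ultimately have "circuit (set (d # ds))" using closed_walk_circuit by blast
  then show ?thesis using ds(2) by (intro exI[of _ "set (d # ds)"]) auto
qed

lemma bridgeless_circuit:
  assumes e: "e \<in> BL"
  shows "\<exists>C. circuit C \<and> (e, True) \<in> C"
proof -
  have "(src e, tgt e) \<in> (adj src tgt (E - {e}))\<^sup>*"
    using e by (simp add: bridgeless_edges_def is_bridge_def)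
  then have "(he (e, True), ta (e, True)) \<in> (darcs src tgt ((E - {e}) \<times> UNIV))\<^sup>*"
    using adj_rtrancl_sym adj_eq_darcs by (metis ohead_def otail_def fst_conv snd_conv)
  moreover have "e \<in> E" using e by (simp add: bridgeless_edges_def)
  ultimately show ?thesis using close_circuit[of "(e, True)" "(E - {e}) \<times> UNIV"] by (auto simp: rv_def)
qed

(* Partial orientations of the bridgeless part in which every oriented edge lies on a
   directed cycle; strongly connected orientations are exactly the total ones. *)
definition cyclic_partial :: "('e \<times> bool) set \<Rightarrow> bool" where
  "cyclic_partial D \<longleftrightarrow> D \<subseteq> BL \<times> UNIV \<and> (\<forall>d\<in>D. rv d \<notin> D) \<and>
     (\<forall>d\<in>D. (he d, ta d) \<in> (darcs src tgt D)\<^sup>*)"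

abbreviation "SC D \<equiv> strongly_connected_orientation V BL src tgt D"

lemma BL_E: "BL \<subseteq> E" by (auto simp: bridgeless_edges_def)

lemma sc_total: "SC D \<Longrightarrow> e \<in> BL \<Longrightarrow> (e, True) \<in> D \<or> (e, False) \<in> D"
  unfolding strongly_connected_orientation_def is_orientation_def by blast

lemma sc_cyclic_partial:
  assumes sc: "SC D"
  shows "cyclic_partial D"
proof -
  have or: "is_orientation BL D" using sc by (simp add: strongly_connected_orientation_def)
  then have sub: "D \<subseteq> BL \<times> UNIV" by (simp add: is_orientation_def)
  have "rv d \<notin> D" if d: "d \<in> D" for d
  proof -
    have "fst d \<in> BL" using sub d by auto
    then have "((fst d, True) \<in> D) \<noteq> ((fst d, False) \<in> D)" using or by (simp add: is_orientation_def)
    then show ?thesis using d by (cases d; cases "snd d") (auto simp: rv_def)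
  qed
  moreover have "(he d, ta d) \<in> (darcs src tgt D)\<^sup>*" if d: "d \<in> D" for d
  proof -
    have fd: "fst d \<in> BL" using sub d by auto
    then have "(he d, ta d) \<in> (adj src tgt BL)\<^sup>*"
      using adj_rtrancl_sym[OF r_into_rtrancl[OF adj_arc[of d BL src tgt]]] by blast
    moreover have "fst d \<in> E" using fd BL_E by blast
    ultimately show ?thesis
      using sc ta_V he_V unfolding strongly_connected_orientation_def by blast
  qed
  ultimately show ?thesis using sub by (simp add: cyclic_partial_def)
qed

lemma cyclic_partial_sc:
  assumes cp: "cyclic_partial D" and total: "\<forall>e\<in>BL. (e, True) \<in> D \<or> (e, False) \<in> D"
  shows "SC D"
proof -
  have "is_orientation BL D"
    unfolding is_orientation_def using cp total by (auto simp: cyclic_partial_def rv_def)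
  moreover have "adj src tgt BL \<subseteq> (darcs src tgt D)\<^sup>*"
  proof
    fix p assume "p \<in> adj src tgt BL"
    then obtain e where e: "e \<in> BL" "p = (src e, tgt e) \<or> p = (tgt e, src e)"
      unfolding adj_def by blast
    obtain d where d: "d \<in> D" "fst d = e" using total e(1) by fastforce
    have "(ta d, he d) \<in> (darcs src tgt D)\<^sup>*" "(he d, ta d) \<in> (darcs src tgt D)\<^sup>*"
      using darcs_arc[OF d(1)] cp d(1) by (auto simp: cyclic_partial_def)
    then show "p \<in> (darcs src tgt D)\<^sup>*"
      using e(2) d(2) by (cases "snd d") (auto simp: otail_def ohead_def)
  qed
  then have "(adj src tgt BL)\<^sup>* \<subseteq> (darcs src tgt D)\<^sup>*" by (metis rtrancl_subset_rtrancl)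
  ultimately show ?thesis unfolding strongly_connected_orientation_def by blast
qed

lemma sc_circuit:
  assumes sc: "SC D" and d: "d \<in> D"
  shows "\<exists>C. circuit C \<and> C \<subseteq> D \<and> d \<in> C"
proof -
  have cp: "cyclic_partial D" using sc_cyclic_partial[OF sc] .
  then have sub: "D \<subseteq> E \<times> UNIV" using BL_E by (auto simp: cyclic_partial_def)
  have "fst d \<in> E" "rv d \<notin> D" "(he d, ta d) \<in> (darcs src tgt D)\<^sup>*"
    using cp d sub by (auto simp: cyclic_partial_def)
  then show ?thesis using close_circuit[of d D] sub d by auto
qed

definition unoriented_arcs :: "('e \<times> bool) set \<Rightarrow> ('e \<times> bool) set \<Rightarrow> ('e \<times> bool) set" where
  "unoriented_arcs D C = {d \<in> C. (fst d, True) \<notin> D \<and> (fst d, False) \<notin> D}"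

lemma add_circuit_antisymmetric:
  assumes cp: "cyclic_partial D" and C: "circuit C"
  shows "\<forall>d\<in>D \<union> unoriented_arcs D C. rv d \<notin> D \<union> unoriented_arcs D C"
proof (intro ballI notI)
  fix d assume d: "d \<in> D \<union> unoriented_arcs D C" and r: "rv d \<in> D \<union> unoriented_arcs D C"
  let ?N = "unoriented_arcs D C"
  consider "d \<in> D" "rv d \<in> D" | "d \<in> D" "rv d \<in> ?N" | "d \<in> ?N" "rv d \<in> D" | "d \<in> ?N" "rv d \<in> ?N"
    using d r by blast
  then show False
  proof cases
    case 1 then show ?thesis using cp by (simp add: cyclic_partial_def)
  next
    case 2 then show ?thesis by (cases d; cases "snd d") (auto simp: unoriented_arcs_def rv_def)
  next
    case 3 then show ?thesis by (cases d; cases "snd d") (auto simp: unoriented_arcs_def rv_def)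
  next
    case 4 then show ?thesis using circuit_rv[OF C] by (auto simp: unoriented_arcs_def)
  qed
qed

(* After adding the unoriented arcs of C, every oriented edge of C can be traversed:
   either it was added, or it or its reverse already lay on a cycle inside D. *)
lemma add_circuit_traversable:
  assumes cp: "cyclic_partial D" and d: "d \<in> C"
  shows "(ta d, he d) \<in> (darcs src tgt (D \<union> unoriented_arcs D C))\<^sup>*"
proof -
  let ?D' = "D \<union> unoriented_arcs D C"
  consider "d \<in> ?D'" | "rv d \<in> D"
    using d by (cases d; cases "snd d") (auto simp: unoriented_arcs_def rv_def)
  then show ?thesis
  proof cases
    case 1 then show ?thesis by (auto intro!: darcs_arc)
  next
    case 2
    then have "(ta d, he d) \<in> (darcs src tgt D)\<^sup>*" using cp by (fastforce simp: cyclic_partial_def)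
    then show ?thesis using rtrancl_mono[OF darcs_mono[of D ?D']] by blast
  qed
qed

lemma add_circuit_cyclic:
  assumes cp: "cyclic_partial D" and C: "circuit C"
  shows "cyclic_partial (D \<union> unoriented_arcs D C)"
proof -
  let ?D' = "D \<union> unoriented_arcs D C"
  have "?D' \<subseteq> BL \<times> UNIV"
    using cp circuit_not_bridge[OF C] by (force simp: cyclic_partial_def unoriented_arcs_def)
  moreover have "(he d, ta d) \<in> (darcs src tgt ?D')\<^sup>*" if d: "d \<in> ?D'" for d
  proof (cases "d \<in> D")
    case True
    then have "(he d, ta d) \<in> (darcs src tgt D)\<^sup>*" using cp by (simp add: cyclic_partial_def)
    then show ?thesis using rtrancl_mono[OF darcs_mono[of D ?D']] by blast
  next
    case False
    then have "d \<in> C" using d by (simp add: unoriented_arcs_def)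
    then have "(he d, ta d) \<in> ((darcs src tgt ?D')\<^sup>*)\<^sup>*"
      by (rule circuit_reach[OF C]) (use add_circuit_traversable[OF cp] in blast)
    then show ?thesis by simp
  qed
  ultimately show ?thesis using add_circuit_antisymmetric[OF cp C] by (simp add: cyclic_partial_def)
qed

(* A cyclic partial orientation can be extended to orient one more non-bridge e: add the
   unoriented arcs of a circuit through (e, True). *)
lemma extend_one:
  assumes cp: "cyclic_partial D" and e: "e \<in> BL" and nT: "(e, True) \<notin> D" and nF: "(e, False) \<notin> D"
  shows "\<exists>D'. cyclic_partial D' \<and> D \<subseteq> D' \<and> (e, True) \<in> D'"
proof -
  obtain C where C: "circuit C" "(e, True) \<in> C" using bridgeless_circuit[OF e] by blast
  have "(e, True) \<in> unoriented_arcs D C" using C(2) nT nF by (simp add: unoriented_arcs_def)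
  then show ?thesis using add_circuit_cyclic[OF cp C(1)] by blast
qed

lemma extend_to_sc:
  assumes "cyclic_partial D"
  shows "\<exists>D'. SC D' \<and> D \<subseteq> D'"
  using assms
proof (induction "card {e\<in>BL. (e, True) \<notin> D \<and> (e, False) \<notin> D}" arbitrary: D rule: less_induct)
  case less
  show ?case
  proof (cases "\<forall>e\<in>BL. (e, True) \<in> D \<or> (e, False) \<in> D")
    case True then show ?thesis using cyclic_partial_sc less.prems by blast
  next
    case False
    then obtain e where e: "e \<in> BL" "(e, True) \<notin> D" "(e, False) \<notin> D" by blast
    obtain D1 where D1: "cyclic_partial D1" "D \<subseteq> D1" "(e, True) \<in> D1"
      using extend_one[OF less.prems e] by blast
    have "{e\<in>BL. (e, True) \<notin> D1 \<and> (e, False) \<notin> D1} \<subset> {e\<in>BL. (e, True) \<notin> D \<and> (e, False) \<notin> D}"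
      using D1 e by blast
    moreover have "finite {e\<in>BL. (e, True) \<notin> D \<and> (e, False) \<notin> D}"
      using finE BL_E by (auto intro: finite_subset)
    ultimately obtain D' where "SC D'" "D1 \<subseteq> D'"
      using less.hyps[OF psubset_card_mono D1(1)] by blast
    then show ?thesis using D1(2) by blast
  qed
qed

lemma pos_cyclic_partial:
  assumes yH: "y \<in> H"
  shows "cyclic_partial (pos y)"
  unfolding cyclic_partial_def
proof (intro conjI ballI)
  show "pos y \<subseteq> BL \<times> UNIV"
    using pos_in_circuit[OF yH] circuit_not_bridge by (fastforce simp: mem_Times_iff)
next
  fix d assume "d \<in> pos y"
  then show "rv d \<notin> pos y" by (rule pos_antisymmetric)
next
  fix d assume d: "d \<in> pos y"
  obtain C where C: "circuit C" "C \<subseteq> pos y" "d \<in> C" using pos_in_circuit[OF yH d] by blast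
  then show "(he d, ta d) \<in> (darcs src tgt (pos y))\<^sup>*"
    using circuit_reach_self rtrancl_mono[OF darcs_mono[OF C(2)]] by blast
qed

lemma finite_sc: "finite {D. SC D}"
proof -
  have "{D. SC D} \<subseteq> Pow (E \<times> UNIV)"
    using BL_E by (auto simp: strongly_connected_orientation_def is_orientation_def)
  moreover have "finite (Pow (E \<times> (UNIV :: bool set)))" using finE by simp
  ultimately show ?thesis by (rule finite_subset)
qed

lemma ex_sc: "\<exists>D. SC D"
  using extend_to_sc[of "{}"] by (simp add: cyclic_partial_def)

end

context graph
begin

definition is_proj :: "('e \<Rightarrow> real) list \<Rightarrow> ('e \<Rightarrow> real) \<Rightarrow> ('e \<Rightarrow> real) \<Rightarrow> bool" where
  "is_proj bs w p \<longleftrightarrow> p \<in> H \<and> (\<forall>b\<in>set bs. inner_ch E (\<lambda>e. w e - p e) b = 0) \<and>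
     (\<forall>z. (\<forall>b\<in>set bs. inner_ch E z b = 0) \<longrightarrow> inner_ch E z p = 0)"

(* Gram-Schmidt step: projecting onto span (b # bs) corrects the projection onto span bs
   along the component b' of b orthogonal to span bs. *)
lemma proj_cons:
  assumes bH: "b \<in> H" and pb: "is_proj bs b pb" and p': "is_proj bs w p'"
  shows "\<exists>p. is_proj (b # bs) w p"
proof -
  define b' where "b' = (\<lambda>e. b e - pb e)"
  define r where "r = (\<lambda>e. w e - p' e)"
  have b'H: "b' \<in> H" unfolding b'_def using flow_diff[OF bH] pb by (simp add: is_proj_def)
  have b'orth: "\<forall>h\<in>set bs. inner_ch E b' h = 0" using pb by (simp add: is_proj_def b'_def)
  have rorth: "\<forall>h\<in>set bs. inner_ch E r h = 0" using p' by (simp add: is_proj_def r_def)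
  have b_split: "b = (\<lambda>e. b' e + pb e)" by (simp add: b'_def)
  have rb: "inner_ch E r b = inner_ch E r b'"
    using pb rorth inner_ch_add_right[of E r b' pb] by (simp add: is_proj_def flip: b_split)
  have b'b: "inner_ch E b' b = qf E b'"
    using pb b'orth inner_ch_add_right[of E b' b' pb] by (simp add: is_proj_def qf_def flip: b_split)
  show ?thesis
  proof (cases "qf E b' = 0")
    case True
    then have "inner_ch E r b' = 0" using qf_zero_iff[OF finE] by (simp add: inner_ch_def)
    then show ?thesis using p' rb by (intro exI[of _ p']) (auto simp: is_proj_def r_def)
  next
    case False
    define c where "c = inner_ch E r b' / qf E b'"
    define p where "p = (\<lambda>e. p' e + c * b' e)"
    have ip: "inner_ch E (\<lambda>e. w e - p e) h = inner_ch E r h - c * inner_ch E b' h" for h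
    proof -
      have "(\<lambda>e. w e - p e) = (\<lambda>e. r e - c * b' e)" by (auto simp: p_def r_def)
      then show ?thesis by (simp add: inner_ch_diff_left inner_ch_scale_left)
    qed
    have "p \<in> H" unfolding p_def using flow_add flow_scale[OF b'H] p' by (simp add: is_proj_def)
    moreover have "\<forall>h\<in>set (b # bs). inner_ch E (\<lambda>e. w e - p e) h = 0"
      using ip[of b] rb b'b False rorth b'orth ip by (simp add: c_def)
    moreover have "inner_ch E z p = 0" if z: "\<forall>h\<in>set (b # bs). inner_ch E z h = 0" for z
    proof -
      have "inner_ch E z p = inner_ch E z p' + c * (inner_ch E z b - inner_ch E z pb)"
        unfolding p_def inner_ch_add_right inner_ch_scale_right b'_def inner_ch_diff_right ..
      then show ?thesis using z p' pb by (simp add: is_proj_def)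
    qed
    ultimately show ?thesis unfolding is_proj_def by blast
  qed
qed

lemma proj_exists: "\<forall>b\<in>set bs. b \<in> H \<Longrightarrow> \<exists>p. is_proj bs w p"
proof (induction bs arbitrary: w)
  case Nil
  then show ?case using flow_zero by (intro exI[of _ "\<lambda>e. 0"]) (simp add: is_proj_def inner_ch_def)
next
  case (Cons b bs)
  then show ?case using proj_cons by (meson list.set_intros)
qed

(* Orthogonal projection onto the flow space, which is spanned by the finitely many circuits. *)
lemma proj_H: "\<exists>p\<in>H. \<forall>y\<in>H. inner_ch E (\<lambda>e. w e - p e) y = 0"
proof -
  obtain cl where cl: "set cl = circ_chain ` {C. circuit C}"
    using finite_circuits by (metis finite_imageI finite_list)
  then obtain p where p: "is_proj cl w p" using proj_exists circ_flow by fastforce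
  then have "p \<in> H" by (simp add: is_proj_def)
  moreover have "inner_ch E (\<lambda>e. w e - p e) y = 0" if "y \<in> H" for y
    using conformal_orth[OF that] p cl by (simp add: is_proj_def)
  ultimately show ?thesis by blast
qed

lemma circuit_cover:
  assumes sc: "SC D"
  shows "\<exists>g\<in>H. (\<forall>d\<in>D. oval g d \<ge> 1) \<and>
           (\<forall>z. (\<forall>C. circuit C \<and> C \<subseteq> D \<longrightarrow> inner_ch E z (circ_chain C) = 0) \<longrightarrow> inner_ch E z g = 0)"
proof -
  have rvD: "\<forall>d\<in>D. rv d \<notin> D" using sc_cyclic_partial[OF sc] by (simp add: cyclic_partial_def)
  obtain gl where gl: "set gl = {C. circuit C \<and> C \<subseteq> D}"
    using finite_list finite_subset[OF _ finite_circuits] by (metis (no_types, lifting) mem_Collect_eq subsetI)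
  define g where "g = (\<lambda>e. \<Sum>C\<leftarrow>gl. circ_chain C e)"
  have "g \<in> H" unfolding g_def using gl circ_flow by (intro flow_sum_list) auto
  moreover have "oval g d \<ge> 1" if d: "d \<in> D" for d
  proof -
    have "oval (circ_chain C) d = of_bool (d \<in> C)" if "C \<in> set gl" for C
      using that gl rvD d oval_circ_chain[of C d] circuit_rv by auto
    then have "oval g d = (\<Sum>C\<leftarrow>gl. of_bool (d \<in> C))"
      unfolding g_def oval_sum_list by (intro arg_cong[where f=sum_list] map_cong) auto
    moreover obtain C where "circuit C" "C \<subseteq> D" "d \<in> C" using sc_circuit[OF sc d] by blast
    then have "(1::real) \<in> set (map (\<lambda>C. of_bool (d \<in> C)) gl)" using gl by force
    then have "1 \<le> (\<Sum>C\<leftarrow>gl. of_bool (d \<in> C) :: real)" by (rule member_le_sum_list) auto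
    ultimately show ?thesis by simp
  qed
  moreover have "inner_ch E z g = 0"
    if "\<forall>C. circuit C \<and> C \<subseteq> D \<longrightarrow> inner_ch E z (circ_chain C) = 0" for z
  proof -
    have "(\<Sum>C\<leftarrow>gl. inner_ch E z (circ_chain C)) = (\<Sum>C\<leftarrow>gl. 0)"
      using that gl by (intro arg_cong[where f=sum_list] map_cong) auto
    then show ?thesis unfolding g_def inner_ch_sum_list_right by simp
  qed
  ultimately show ?thesis by blast
qed

(* The circuits inside a strongly connected orientation D span H: a flow z orthogonal to all
   of them vanishes.  Indeed y = z + K g is a flow positive only along D for large K, so it
   decomposes into circuits of D, whence <z,y> = <z,g> = 0 and q(z) = 0. *)
lemma sc_circuits_span:
  assumes sc: "SC D" and z: "z \<in> H"
    and orth: "\<forall>C. circuit C \<and> C \<subseteq> D \<longrightarrow> inner_ch E z (circ_chain C) = 0"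
  shows "z = (\<lambda>e. 0)"
proof -
  obtain g where g: "g \<in> H" "\<forall>d\<in>D. oval g d \<ge> 1" "inner_ch E z g = 0"
    using circuit_cover[OF sc] orth by blast
  define K where "K = 1 + (\<Sum>e\<in>E. \<bar>z e\<bar>)"
  have zK: "\<bar>z e\<bar> < K" for e
  proof (cases "e \<in> E")
    case True
    then have "\<bar>z e\<bar> \<le> (\<Sum>e\<in>E. \<bar>z e\<bar>)" using finE by (intro member_le_sum) auto
    then show ?thesis by (simp add: K_def)
  next
    case False then show ?thesis using flow_outside[OF z] by (simp add: K_def sum_nonneg add_pos_nonneg)
  qed
  then have Kpos: "K > 0" by (meson abs_ge_zero le_less_trans)
  define y where "y = (\<lambda>e. z e + K * g e)"
  have yH: "y \<in> H" unfolding y_def using flow_add[OF z flow_scale[OF g(1)]] .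
  have "pos y \<subseteq> D"
  proof
    fix d assume d: "d \<in> pos y"
    then have ov: "oval y d > 0" by (simp add: pos_def)
    have "y (fst d) \<noteq> 0" using ov by (auto simp: oval_def split: if_splits)
    then have "fst d \<in> BL" using flow_bridge[OF yH] by blast
    show "d \<in> D"
    proof (rule ccontr)
      assume "d \<notin> D"
      then have "rv d \<in> D" using sc_total[OF sc \<open>fst d \<in> BL\<close>] by (cases d; cases "snd d") (auto simp: rv_def)
      then have "K \<le> K * oval g (rv d)" using g(2) Kpos by (simp del: oval_rv)
      moreover have "oval z (rv d) > - K" using zK[of "fst d"] by (auto simp: oval_def rv_def)
      moreover have "oval y (rv d) = oval z (rv d) + K * oval g (rv d)"
        unfolding y_def oval_add oval_scale ..
      ultimately show False using ov by simp
    qed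
  qed
  then have "inner_ch E z y = 0" using conformal_orth[OF yH] orth by blast
  then have "qf E z = 0" using g(3) by (simp add: y_def qf_def inner_ch_add_right inner_ch_scale_right)
  then have "\<forall>e\<in>E. z e = 0" using qf_zero_iff[OF finE] by blast
  then show ?thesis using flow_outside[OF z] by fastforce
qed

lemma qf_circ_sub:
  assumes c: "circuit C" and CD: "C \<subseteq> D" and rvD: "\<forall>d\<in>D. rv d \<notin> D"
  shows "qf E (circ_chain C) = inner_ch E (circ_chain D) (circ_chain C)"
proof -
  have "circ_chain C e * circ_chain C e = circ_chain D e * circ_chain C e" for e
  proof -
    have "(e, True) \<in> C \<Longrightarrow> (e, False) \<notin> C" using circuit_rv[OF c, of "(e,True)"] by (simp add: rv_def)
    moreover have "(e, False) \<in> D \<Longrightarrow> (e, True) \<notin> D" using rvD by (force simp: rv_def)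
    ultimately show ?thesis using CD by (auto simp: circ_chain_def)
  qed
  then show ?thesis unfolding qf_def inner_ch_def by (rule sum.cong[OF refl])
qed

(* v^D exists, is unique, and is the projection of x^D / 2 onto H. *)
lemma vD_props:
  assumes sc: "SC D"
  shows "\<exists>!v. is_vD V E src tgt D v" "vD V E src tgt D \<in> H"
    "\<forall>m\<in>H. 2 * inner_ch E (vD V E src tgt D) m = inner_ch E (circ_chain D) m"
    "is_vD V E src tgt D (vD V E src tgt D)"
proof -
  have rvD: "\<forall>d\<in>D. rv d \<notin> D" using sc_cyclic_partial[OF sc] by (simp add: cyclic_partial_def)
  obtain p where p: "p \<in> H" "\<forall>y\<in>H. inner_ch E (\<lambda>e. (1/2) * circ_chain D e - p e) y = 0"
    using proj_H[of "\<lambda>e. (1/2) * circ_chain D e"] by blast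
  have proj: "2 * inner_ch E p y = inner_ch E (circ_chain D) y" if "y \<in> H" for y
  proof -
    have "inner_ch E (\<lambda>e. (1/2) * circ_chain D e) y - inner_ch E p y = 0"
      using p(2) that by (simp only: inner_ch_diff_left)
    then show ?thesis unfolding inner_ch_scale_left by linarith
  qed
  have "2 * inner_ch E p (circ_chain C) = qf E (circ_chain C)" if "circuit C" "C \<subseteq> D" for C
    using proj[OF circ_flow[OF that(1)]] qf_circ_sub[OF that rvD] by simp
  then have isp: "is_vD V E src tgt D p" unfolding is_vD_def using p(1) by blast
  have uniq: "v = p" if v: "is_vD V E src tgt D v" for v
  proof -
    have vH: "v \<in> H" using v by (simp add: is_vD_def)
    have "inner_ch E (\<lambda>e. v e - p e) (circ_chain C) = 0" if "circuit C" "C \<subseteq> D" for C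
    proof -
      have "2 * inner_ch E v (circ_chain C) = qf E (circ_chain C)"
        "2 * inner_ch E p (circ_chain C) = qf E (circ_chain C)"
        using v isp that unfolding is_vD_def by blast+
      then show ?thesis unfolding inner_ch_diff_left by linarith
    qed
    then have "(\<lambda>e. v e - p e) = (\<lambda>e. 0)" using sc_circuits_span[OF sc flow_diff[OF vH p(1)]] by blast
    then show "v = p" by (simp add: fun_eq_iff)
  qed
  show "\<exists>!v. is_vD V E src tgt D v" using isp uniq by blast
  have "vD V E src tgt D = p" unfolding vD_def using isp uniq by (rule the_equality)
  then show "vD V E src tgt D \<in> H" "\<forall>m\<in>H. 2 * inner_ch E (vD V E src tgt D) m = inner_ch E (circ_chain D) m"
    "is_vD V E src tgt D (vD V E src tgt D)"
    using p(1) proj isp by auto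
qed

end

(* c x \<le> x^2 for integers x and |c| \<le> 1: the coordinates of x^D lie in [-1, 1]. *)
lemma int_le_sq: "x \<in> \<int> \<Longrightarrow> \<bar>c\<bar> \<le> 1 \<Longrightarrow> c * x \<le> x * (x::real)"
proof (cases "x = 0")
  case False
  assume x: "x \<in> \<int>" and c: "\<bar>c\<bar> \<le> 1"
  then have "\<bar>x\<bar> \<ge> 1" using Ints_nonzero_abs_ge1 False by blast
  have "c * x \<le> \<bar>c\<bar> * \<bar>x\<bar>" by (simp flip: abs_mult)
  also have "\<dots> \<le> \<bar>x\<bar>" using c by (simp add: mult_left_le_one_le)
  also have "\<dots> \<le> \<bar>x\<bar> * \<bar>x\<bar>" using \<open>\<bar>x\<bar> \<ge> 1\<close> mult_left_mono[of 1 "\<bar>x\<bar>" "\<bar>x\<bar>"] by simp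
  finally show ?thesis by (simp add: abs_mult_self_eq)
qed simp

lemma sq_bound: "t * t \<le> Q \<Longrightarrow> \<bar>t\<bar> \<le> 1 + (Q::real)"
proof (cases "\<bar>t\<bar> \<le> 1")
  case False
  assume h: "t * t \<le> Q"
  have "\<bar>t\<bar> * 1 \<le> \<bar>t\<bar> * \<bar>t\<bar>" using False by (intro mult_left_mono) auto
  then show ?thesis using h by (simp add: abs_mult_self_eq)
qed (use zero_le_square[of t] in linarith)

context graph
begin

lemma zero_lattice: "(\<lambda>e. 0) \<in> \<Lambda>"
  unfolding int_flows_def using flow_zero by auto

lemma lattice_add_circ: "m \<in> \<Lambda> \<Longrightarrow> circuit C \<Longrightarrow> (\<lambda>e. m e + circ_chain C e) \<in> \<Lambda>"
  using flow_add[OF _ circ_flow] by (auto simp: int_flows_def circ_chain_def)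

(* Lower bound: the lattice point nearest to v^D is 0, since 2<v^D, m> = <x^D, m> \<le> q(m)
   for integer m. *)
lemma lower_bound:
  assumes sc: "SC D" and m: "m \<in> \<Lambda>"
  shows "qf E (vD V E src tgt D) \<le> qf E (\<lambda>e. vD V E src tgt D e - m e)"
proof -
  have mH: "m \<in> H" and mZ: "\<forall>e\<in>E. m e \<in> \<int>" using m by (auto simp: int_flows_def)
  have "2 * inner_ch E (vD V E src tgt D) m = inner_ch E (circ_chain D) m"
    using vD_props(3)[OF sc] mH by blast
  also have "\<dots> \<le> qf E m"
    unfolding inner_ch_def qf_def
    by (rule sum_mono, rule int_le_sq) (use mZ in \<open>auto simp: circ_chain_def\<close>)
  finally show ?thesis using qf_diff[of E "vD V E src tgt D" m] by linarith
qed

lemma finite_lattice_ball: "finite {m \<in> \<Lambda>. qf E (\<lambda>e. x e - m e) \<le> R}"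
proof -
  define N where "N = \<lceil>(\<Sum>e\<in>E. \<bar>x e\<bar>) + 1 + R\<rceil>"
  let ?F = "{f. \<forall>e. (e \<in> E \<longrightarrow> f e \<in> (of_int ` {-N..N} :: real set)) \<and> (e \<notin> E \<longrightarrow> f e = 0)}"
  have "{m \<in> \<Lambda>. qf E (\<lambda>e. x e - m e) \<le> R} \<subseteq> ?F"
  proof (safe)
    fix m e assume mL: "m \<in> \<Lambda>" and mq: "qf E (\<lambda>e. x e - m e) \<le> R"
    show "e \<notin> E \<Longrightarrow> m e = 0" using mL by (auto simp: int_flows_def flow_iff)
    assume e: "e \<in> E"
    have "(x e - m e) * (x e - m e) \<le> qf E (\<lambda>e. x e - m e)"
      unfolding qf_def inner_ch_def using finE e by (intro member_le_sum) auto
    then have "\<bar>x e - m e\<bar> \<le> 1 + R" using mq by (intro sq_bound) linarith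
    moreover have "\<bar>x e\<bar> \<le> (\<Sum>e\<in>E. \<bar>x e\<bar>)" using finE e by (intro member_le_sum) auto
    moreover obtain k where k: "m e = of_int k" using mL e by (auto simp: int_flows_def elim!: Ints_cases)
    ultimately have "\<bar>k\<bar> \<le> N" unfolding N_def by linarith
    then show "m e \<in> of_int ` {-N..N}" unfolding k by (intro image_eqI[OF refl]) auto
  qed
  moreover have "finite ?F" by (rule finite_set_of_finite_funs) (use finE in auto)
  ultimately show ?thesis by (rule finite_subset)
qed

lemma nearest_lattice_point: "\<exists>m0\<in>\<Lambda>. \<forall>m\<in>\<Lambda>. qf E (\<lambda>e. x e - m0 e) \<le> qf E (\<lambda>e. x e - m e)"
proof -
  define f where "f m = qf E (\<lambda>e. x e - m e)" for m
  define S where "S = {m \<in> \<Lambda>. f m \<le> f (\<lambda>e. 0)}"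
  have finS: "finite (f ` S)" using finite_lattice_ball by (simp add: S_def f_def)
  have 0: "(\<lambda>e. 0) \<in> S" using zero_lattice by (simp add: S_def)
  then have "Min (f ` S) \<in> f ` S" using Min_in[OF finS] by blast
  then obtain m0 where m0: "m0 \<in> S" "f m0 = Min (f ` S)" by auto
  have "f m0 \<le> f m" if m: "m \<in> \<Lambda>" for m
  proof (cases "m \<in> S")
    case True then show ?thesis using m0(2) finS by simp
  next
    case False
    then have "f (\<lambda>e. 0) < f m" using m by (simp add: S_def)
    moreover have "f m0 \<le> f (\<lambda>e. 0)" using m0(2) finS 0 by simp
    ultimately show ?thesis by linarith
  qed
  then show ?thesis using m0(1) unfolding f_def S_def by blast
qed

(* Upper bound: if m0 is a nearest lattice point to x, then y = x - m0 satisfies the Voronoi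
   inequalities 2<y, x^C> \<le> q(x^C); its positive edges extend to a strongly connected
   orientation D, and decomposing y into circuits of D gives q(y) \<le> <v^D, y>, hence
   q(y) \<le> q(v^D). *)
lemma upper_bound:
  assumes x: "x \<in> H"
  shows "\<exists>m\<in>\<Lambda>. \<exists>D. SC D \<and> qf E (\<lambda>e. x e - m e) \<le> qf E (vD V E src tgt D)"
proof -
  obtain m0 where m0: "m0 \<in> \<Lambda>" "\<forall>m\<in>\<Lambda>. qf E (\<lambda>e. x e - m0 e) \<le> qf E (\<lambda>e. x e - m e)"
    using nearest_lattice_point by blast
  define y where "y = (\<lambda>e. x e - m0 e)"
  have yH: "y \<in> H" unfolding y_def using flow_diff[OF x] m0(1) by (simp add: int_flows_def)
  have voronoi: "2 * inner_ch E y (circ_chain C) \<le> qf E (circ_chain C)" if C: "circuit C" for C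
  proof -
    have "qf E y \<le> qf E (\<lambda>e. x e - (m0 e + circ_chain C e))"
      using m0(2) lattice_add_circ[OF m0(1) C] unfolding y_def by (rule bspec)
    also have "(\<lambda>e. x e - (m0 e + circ_chain C e)) = (\<lambda>e. y e - circ_chain C e)" by (auto simp: y_def)
    finally show ?thesis using qf_diff[of E y "circ_chain C"] by linarith
  qed
  obtain D where D: "SC D" "pos y \<subseteq> D" using extend_to_sc[OF pos_cyclic_partial[OF yH]] by blast
  let ?v = "vD V E src tgt D"
  have "inner_ch E y y \<le> inner_ch E ?v y"
  proof (rule conformal_inner_mono[OF yH])
    fix C assume "circuit C" "C \<subseteq> pos y"
    then show "inner_ch E y (circ_chain C) \<le> inner_ch E ?v (circ_chain C)"
      using voronoi vD_props(4)[OF D(1)] D(2) unfolding is_vD_def by fastforce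
  qed
  then have "qf E y \<le> qf E ?v" using inner_le_qf[of E ?v y] by (simp add: qf_def)
  then show ?thesis using m0(1) D(1) unfolding y_def by blast
qed

end

lemma cov_number_eqI:
  assumes "\<forall>x\<in>S. \<exists>m\<in>L. Q (\<lambda>e. x e - m e) \<le> M"
    and "x0 \<in> S" and "\<forall>m\<in>L. M \<le> Q (\<lambda>e. x0 e - m e)"
  shows "cov_number Q S L = M"
  unfolding cov_number_def
proof (rule cInf_eq_minimum)
  show "M \<in> {r. \<forall>x\<in>S. \<exists>m\<in>L. Q (\<lambda>e. x e - m e) \<le> r}" using assms(1) by blast
  fix r assume "r \<in> {r. \<forall>x\<in>S. \<exists>m\<in>L. Q (\<lambda>e. x e - m e) \<le> r}"
  then show "M \<le> r" using assms(2,3) by force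
qed

theorem mainTheorem19:
  fixes V :: "'v set" and E :: "'e set" and src tgt :: "'e \<Rightarrow> 'v"
  assumes "finite V" and "finite E"
    and "\<forall>e\<in>E. src e \<in> V \<and> tgt e \<in> V"
    and "\<forall>u\<in>V. \<forall>v\<in>V. (u, v) \<in> (adj src tgt E)\<^sup>*"
  shows "(\<forall>D. strongly_connected_orientation V (bridgeless_edges E src tgt) src tgt D \<longrightarrow>
            (\<exists>!v. is_vD V E src tgt D v))
       \<and> cov_number (qf E) (flows V E src tgt) (int_flows V E src tgt)
         = Max {qf E (vD V E src tgt D) | D.
                  strongly_connected_orientation V (bridgeless_edges E src tgt) src tgt D}"
proof -
  interpret G: graph V E src tgt using assms(2,3) by unfold_locales
  let ?M = "{qf E (vD V E src tgt D) | D. G.SC D}"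
  have "?M = (\<lambda>D. qf E (vD V E src tgt D)) ` {D. G.SC D}" by blast
  then have finM: "finite ?M" and neM: "?M \<noteq> {}" using G.finite_sc G.ex_sc by auto
  have "Max ?M \<in> ?M" using Max_in[OF finM neM] .
  then obtain Dm where Dm: "G.SC Dm" "qf E (vD V E src tgt Dm) = Max ?M" by auto
  have "cov_number (qf E) (flows V E src tgt) (int_flows V E src tgt) = Max ?M"
  proof (rule cov_number_eqI)
    show "\<forall>x\<in>flows V E src tgt. \<exists>m\<in>int_flows V E src tgt. qf E (\<lambda>e. x e - m e) \<le> Max ?M"
    proof
      fix x assume "x \<in> flows V E src tgt"
      then obtain m D where "m \<in> int_flows V E src tgt" "G.SC D"
        "qf E (\<lambda>e. x e - m e) \<le> qf E (vD V E src tgt D)"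
        using G.upper_bound by blast
      moreover have "qf E (vD V E src tgt D) \<le> Max ?M" using Max_ge[OF finM] \<open>G.SC D\<close> by blast
      ultimately show "\<exists>m\<in>int_flows V E src tgt. qf E (\<lambda>e. x e - m e) \<le> Max ?M" by force
    qed
    show "vD V E src tgt Dm \<in> flows V E src tgt" using G.vD_props(2)[OF Dm(1)] .
    show "\<forall>m\<in>int_flows V E src tgt. Max ?M \<le> qf E (\<lambda>e. vD V E src tgt Dm e - m e)"
      using G.lower_bound[OF Dm(1)] Dm(2) by simp
  qed
  then show ?thesis using G.vD_props(1) by blast
qed

end
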